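(* Let $(\Omega,\mathcal G,\mathbb P)$ be a probability space, $\mathcal F=(\mathcal F_t)_{t\in[0,\infty)}$ a filtration with $\mathcal F_\infty\subset\mathcal G$, and $X$ an $\mathbb R^d$-valued Lévy process relative to $\mathcal F$. Let $R:\Omega\to[0,\infty]$ be $\mathcal G$-measurable with $\mathbb P(R<\infty)>0$ and $\mathbb P'(\cdot):=\mathbb P(\cdot\mid R<\infty)$ on $\mathcal G|_{\{R<\infty\}}$. (I) Suppose $\mathcal F_R'$ is independent of $\Delta_RX$ under $\mathbb P'$, and let $P:\Omega\to[0,\infty]$ be $\mathcal G$-measurable with $\mathbb P(P<\infty)>0$ and $\llbracket P\rrbracket=A\cap\llbracket R\rrbracket$ for some $A\in\mathcal O\cup\sigma_{\Omega\times[0,\infty)}(\blacktriangle X)$. Set $\mathcal L'$ to be the law of $\Delta_RX$ under $\mathbb P'$ and $\mathbb P^{:}(F):=\mathbb P(F\mid P<\infty)$ for $F\in\mathcal G|_{\{P<\infty\}}$. (a) If $A\in\mathcal O$, then $\Delta_PX$ is independent of $\mathcal F_P'$ under $\mathbb P^{:}$ and the law of $\Delta_PX$ under $\mathbb P^{:}$ is $\mathcal L'$. (b) If $A=(\blacktriangle X)^{-1}(\Gamma)$ for some $\Gamma\in\mathcal D$, then $\Delta_PX$ is independent of $\mathcal F_P'$ under $\mathbb P^{:}$ and the law of $\Delta_PX$ under $\mathbb P^{:}$ is $\mathcal L'(\cdot\mid\Gamma)$. (II) Conversely, let $R_1,R_2:\Omega\to[0,\infty]$ be $\mathcal G$-measurable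 with $\mathbb P(R_i<\infty)>0$, set $\mathbb P^i(F):=\mathbb P(F\mid R_i<\infty)$ for $F\in\mathcal G|_{\{R_i<\infty\}}$, and suppose $\Delta_{R_i}X$ is independent of $\mathcal F_{R_i}'$ under $\mathbb P^i$ for $i\in\{1,2\}$. (i) If there is $A\in\mathcal O$ with, up to evanescence, $\llbracket R_1\rrbracket=\llbracket R\rrbracket\cap A$ and $\llbracket R_2\rrbracket=\llbracket R\rrbracket\cap A^c$, and if the law $\mathcal M$ of $\Delta_{R_1}X$ under $\mathbb P^1$ equals the law of $\Delta_{R_2}X$ under $\mathbb P^2$, then $\mathcal F_R'$ is independent of $\Delta_RX$ under $\mathbb P'$ and the law of $\Delta_RX$ under $\mathbb P'$ is $\mathcal M$. (ii) If there is $\Gamma\in\mathcal D$ with $\llbracket R_1\rrbracket=\llbracket R\rrbracket\cap\{\blacktriangle X\in\Gamma\}$ and $\llbracket R_2\rrbracket=\llbracket R\rrbracket\cap\{\blacktriangle X\notin\Gamma\}$, if $\mathcal F_R'$ is independent of $\mathbb 1_\Gamma(\Delta_RX)$ under $\mathbb P'$, and if there is a probability law $\mathcal M$ on $(\mathbb D,\mathcal D)$ with $\mathbb P'(\Delta_RX\in\Gamma)=\mathcal M(\Gamma)$, the law of $\Delta_{R_1}X$ under $\mathbb P^1$ equal to $\mathcal M(\cdot\mid\Gamma)$ and the law of $\Delta_{R_2}X$ under $\mathbb P^2$ equal to $\mathcal M(\cdot\mid\mathbb D\setminus\Gamma)$, then $\mathcal F_R'$ is independent of $\Delta_RX$ under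 $\mathbb P'$ and the law of $\Delta_RX$ under $\mathbb P'$ is $\mathcal M$.
   Context: $X$ being a Lévy process relative to $\mathcal F$ means: $X$ is $\mathcal F$-adapted, has càdlàg paths, $X_0=0$ a.s., and for $0\le s\le t$, $X_t-X_s$ is independent of $\mathcal F_s$ and has the law of $X_{t-s}$. $(\mathbb D,\mathcal D)$ is the space of càdlàg paths $[0,\infty)\to\mathbb R^d$ with the $\sigma$-field generated by the coordinate projections. For a random time $S$, on $\{S<\infty\}$, $\Delta_SX:=(X_{S+t}-X_S)_{t\ge0}$; $\blacktriangle X:\Omega\times[0,\infty)\to\mathbb D$ is $(\omega,t)\mapsto\Delta_tX(\omega)$, and $\sigma_{\Omega\times[0,\infty)}(\blacktriangle X)$ is the $\sigma$-field it generates. $\mathcal O$ is the optional $\sigma$-field on $\Omega\times[0,\infty)$, generated by the $\mathcal F$-adapted càdlàg real processes. For a random time $S$, $\mathcal F_S'$ is the $\sigma$-field on $\{S<\infty\}$ generated by $Z_S$ as $Z$ ranges over $\mathcal O$-measurable real processes. $\llbracket S\rrbracket=\{(\omega,t):S(\omega)=t\}$ is the graph of $S$ (in $\Omega\times[0,\infty)$). "Up to evanescence" means up to a set whose projection on $\Omega$ is contained in a $\mathbb P$-null set. *)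

theory Defs
  imports "HOL-Probability.Probability"
begin

definition cadlag :: "(real \<Rightarrow> 'v::topological_space) \<Rightarrow> bool" where
  "cadlag w \<longleftrightarrow> (\<forall>t\<ge>0. (w \<longlongrightarrow> w t) (at_right t)) \<and> (\<forall>t>0. \<exists>l. (w \<longlongrightarrow> l) (at_left t))"

text \<open>Path space D of cadlag paths [0,oo) -> R^d (paths normalised to 0 on negative times),
  with the sigma-field generated by the coordinate projections.\<close>
definition Dspace :: "(real \<Rightarrow> real ^ 'd) set" where
  "Dspace = {w. cadlag w \<and> (\<forall>s<0. w s = 0)}"

definition Dmeas :: "(real \<Rightarrow> real ^ 'd) measure" where
  "Dmeas = sigma Dspace {{w \<in> Dspace. w t \<in> B} | t B. 0 \<le> t \<and> B \<in> sets (borel :: (real ^ 'd) measure)}"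

definition filtration_on :: "'a measure \<Rightarrow> (real \<Rightarrow> 'a measure) \<Rightarrow> bool" where
  "filtration_on M F \<longleftrightarrow> (\<forall>t\<ge>0. subalgebra M (F t)) \<and>
     (\<forall>s t. 0 \<le> s \<longrightarrow> s \<le> t \<longrightarrow> sets (F s) \<subseteq> sets (F t))"

definition indep_rv :: "'a measure \<Rightarrow> 'a set set \<Rightarrow> ('a \<Rightarrow> 'b) \<Rightarrow> 'b measure \<Rightarrow> bool" where
  "indep_rv N \<A> Y Mv \<longleftrightarrow> prob_space.indep_set N \<A> {Y -` B \<inter> space N | B. B \<in> sets Mv}"

definition levy :: "'a measure \<Rightarrow> (real \<Rightarrow> 'a measure) \<Rightarrow> (real \<Rightarrow> 'a \<Rightarrow> real ^ 'd) \<Rightarrow> bool" where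
  "levy M F X \<longleftrightarrow>
     (\<forall>t\<ge>0. X t \<in> borel_measurable (F t)) \<and>
     (\<forall>\<omega>\<in>space M. cadlag (\<lambda>t. X t \<omega>)) \<and>
     (AE \<omega> in M. X 0 \<omega> = 0) \<and>
     (\<forall>s t. 0 \<le> s \<longrightarrow> s \<le> t \<longrightarrow>
        indep_rv M (sets (F s)) (\<lambda>\<omega>. X t \<omega> - X s \<omega>) borel \<and>
        distr M borel (\<lambda>\<omega>. X t \<omega> - X s \<omega>) = distr M borel (X (t - s)))"

definition optional :: "'a measure \<Rightarrow> (real \<Rightarrow> 'a measure) \<Rightarrow> ('a \<times> real) measure" where
  "optional M F = sigma (space M \<times> {0..})
     {{p \<in> space M \<times> {0..}. Z (snd p) (fst p) \<in> B} | (Z :: real \<Rightarrow> 'a \<Rightarrow> real) B.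
        (\<forall>t\<ge>0. Z t \<in> borel_measurable (F t)) \<and> (\<forall>\<omega>\<in>space M. cadlag (\<lambda>t. Z t \<omega>)) \<and>
        B \<in> sets (borel :: real measure)}"

definition fin :: "'a measure \<Rightarrow> ('a \<Rightarrow> ennreal) \<Rightarrow> 'a set" where
  "fin M S = {\<omega> \<in> space M. S \<omega> < \<infinity>}"

definition Fprime :: "'a measure \<Rightarrow> (real \<Rightarrow> 'a measure) \<Rightarrow> ('a \<Rightarrow> ennreal) \<Rightarrow> 'a measure" where
  "Fprime M F S = sigma (fin M S)
     {{\<omega> \<in> fin M S. Z (\<omega>, enn2real (S \<omega>)) \<in> B} | Z B.
        Z \<in> borel_measurable (optional M F) \<and> B \<in> sets (borel :: real measure)}"

definition shiftX :: "(real \<Rightarrow> 'a \<Rightarrow> real ^ 'd) \<Rightarrow> ('a \<Rightarrow> ennreal) \<Rightarrow> 'a \<Rightarrow> real \<Rightarrow> real ^ 'd" where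
  "shiftX X S \<omega> = (\<lambda>s. if 0 \<le> s then X (enn2real (S \<omega>) + s) \<omega> - X (enn2real (S \<omega>)) \<omega> else 0)"

definition blackX :: "(real \<Rightarrow> 'a \<Rightarrow> real ^ 'd) \<Rightarrow> 'a \<times> real \<Rightarrow> real \<Rightarrow> real ^ 'd" where
  "blackX X p = (\<lambda>s. if 0 \<le> s then X (snd p + s) (fst p) - X (snd p) (fst p) else 0)"

definition sigma_blackX :: "'a measure \<Rightarrow> (real \<Rightarrow> 'a \<Rightarrow> real ^ 'd) \<Rightarrow> ('a \<times> real) set set" where
  "sigma_blackX M X = {blackX X -` \<Gamma> \<inter> (space M \<times> {0..}) | \<Gamma>. \<Gamma> \<in> sets Dmeas}"

definition graph :: "'a measure \<Rightarrow> ('a \<Rightarrow> ennreal) \<Rightarrow> ('a \<times> real) set" where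
  "graph M S = {(\<omega>, t). \<omega> \<in> space M \<and> 0 \<le> t \<and> S \<omega> = ennreal t}"

definition cond_meas :: "'a measure \<Rightarrow> 'a set \<Rightarrow> 'a measure" where
  "cond_meas M A = uniform_measure (restrict_space M A) A"

definition evan_eq :: "'a measure \<Rightarrow> ('a \<times> real) set \<Rightarrow> ('a \<times> real) set \<Rightarrow> bool" where
  "evan_eq M S T \<longleftrightarrow> (\<exists>N \<in> null_sets M. fst ` ((S - T) \<union> (T - S)) \<subseteq> N)"

end

(*
  Under P(. | S < \<infinity>), independence of \<Delta>\<^sub>S X from F'\<^sub>S together with law N is equivalent to
  the product formula P(a \<inter> {\<Delta>\<^sub>S X \<in> \<Lambda>}) = P(a) N(\<Lambda>) on the intersection-stable
  generators a = {S < \<infinity>, Z\<^sub>S \<in> B}, Z optional, of F'\<^sub>S.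

  If the graph of P is A \<inter> [R], then P = R on {P < \<infinity>}, and this set is a generator of F'\<^sub>R when A
  is optional, resp. the event {\<Delta>\<^sub>R X \<in> \<Gamma>} when A = {blackX \<in> \<Gamma>}. Every generator for P is a
  generator for R cut down to {P < \<infinity>}, so the product formula for R restricts to P, with the law
  conditioned on \<Gamma> in the second case. Conversely, if the graph of R is split into those of R\<^sub>1 and R\<^sub>2,
  a generator for R meets {R\<^sub>i < \<infinity>} in a generator for R\<^sub>i up to a null set, and the two product
  formulas add up to the one for R; in case (ii) the independence of F'\<^sub>R from 1\<^sub>\<Gamma>(\<Delta>\<^sub>R X)
  provides the weights P(a \<inter> {R\<^sub>1 < \<infinity>}) = P(a) M(\<Gamma>).
*)

theory Submission
  imports Defs
begin

section \<open>Conditioning on an event\<close>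

lemma space_cond_meas: "A \<subseteq> space M \<Longrightarrow> space (cond_meas M A) = A"
  by (auto simp: cond_meas_def space_restrict_space)

lemma sets_cond_meas_iff: "A \<in> sets M \<Longrightarrow> B \<in> sets (cond_meas M A) \<longleftrightarrow> B \<subseteq> A \<and> B \<in> sets M"
  unfolding cond_meas_def sets_uniform_measure
  by (subst sets_restrict_space_iff) (auto dest: sets.sets_into_space)

lemma measurable_cond_meas: "Y \<in> measurable M N \<Longrightarrow> Y \<in> measurable (cond_meas M A) N"
  unfolding cond_meas_def
  by (subst measurable_cong_sets[OF sets_uniform_measure refl]) (rule measurable_restrict_space1)

lemma emeasure_cond_meas:
  assumes "A \<in> sets M" "B \<in> sets M" "B \<subseteq> A"
  shows "emeasure (cond_meas M A) B = emeasure M B / emeasure M A"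
  using assms unfolding cond_meas_def
  by (simp add: emeasure_restrict_space sets_restrict_space_iff Int_absorb1 Int_absorb2)

lemma prob_space_cond_meas:
  assumes "finite_measure M" "A \<in> sets M" "measure M A > 0"
  shows "prob_space (cond_meas M A)"
  unfolding cond_meas_def using assms
  by (intro prob_space_uniform_measure)
     (auto simp: emeasure_restrict_space sets_restrict_space_iff finite_measure.emeasure_eq_measure)

lemma measure_cond_meas:
  assumes "finite_measure M" "A \<in> sets M" "measure M A > 0" "B \<in> sets M" "B \<subseteq> A"
  shows "measure (cond_meas M A) B = measure M B / measure M A"
proof -
  interpret finite_measure M by fact
  have "emeasure (cond_meas M A) B = ennreal (measure M B / measure M A)"
    using emeasure_cond_meas[OF assms(2,4,5)] assms(3) by (simp add: emeasure_eq_measure divide_ennreal)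
  then show ?thesis
    by (simp add: measure_def)
qed

lemma vimage_Int_sets:
  assumes "Y \<in> measurable M N" "A \<in> sets M" "\<Lambda> \<in> sets N"
  shows "Y -` \<Lambda> \<inter> A \<in> sets M"
proof -
  have "Y -` \<Lambda> \<inter> space M \<inter> A \<in> sets M"
    using measurable_sets[OF assms(1,3)] assms(2) by (rule sets.Int)
  moreover have "Y -` \<Lambda> \<inter> space M \<inter> A = Y -` \<Lambda> \<inter> A"
    using sets.sets_into_space[OF assms(2)] by blast
  ultimately show ?thesis
    by simp
qed

lemma measure_distr_cond_meas:
  assumes M: "finite_measure M" and A: "A \<in> sets M" "measure M A > 0"
    and Y: "Y \<in> measurable M N" and \<Lambda>: "\<Lambda> \<in> sets N"
  shows "measure (distr (cond_meas M A) N Y) \<Lambda> = measure M (Y -` \<Lambda> \<inter> A) / measure M A"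
proof -
  have sub: "A \<subseteq> space M"
    using A(1) by (rule sets.sets_into_space)
  have pre: "Y -` \<Lambda> \<inter> A \<in> sets M"
    using Y A(1) \<Lambda> by (rule vimage_Int_sets)
  have "measure (distr (cond_meas M A) N Y) \<Lambda> = measure (cond_meas M A) (Y -` \<Lambda> \<inter> space (cond_meas M A))"
    by (rule measure_distr[OF measurable_cond_meas[OF Y] \<Lambda>])
  also have "\<dots> = measure M (Y -` \<Lambda> \<inter> A) / measure M A"
    using pre sub by (simp add: space_cond_meas measure_cond_meas[OF M A])
  finally show ?thesis .
qed

lemma indep_rv_cond_meas_iff:
  assumes M: "finite_measure M" and A: "A \<in> sets M" "measure M A > 0"
  shows "indep_rv (cond_meas M A) \<A> Y N \<longleftrightarrow>
    (\<forall>a\<in>\<A>. a \<in> sets M \<and> a \<subseteq> A) \<and> (\<forall>B\<in>sets N. Y -` B \<inter> A \<in> sets M) \<and>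
    (\<forall>a\<in>\<A>. \<forall>B\<in>sets N.
       measure M (a \<inter> (Y -` B \<inter> A)) * measure M A = measure M a * measure M (Y -` B \<inter> A))"
proof -
  interpret C: prob_space "cond_meas M A"
    using prob_space_cond_meas[OF assms] .
  have space: "space (cond_meas M A) = A"
    using A(1) by (simp add: space_cond_meas sets.sets_into_space)
  have prob_eq: "C.prob (a \<inter> b) = C.prob a * C.prob b \<longleftrightarrow>
      measure M (a \<inter> b) * measure M A = measure M a * measure M b"
    if "a \<in> sets M" "a \<subseteq> A" "b \<in> sets M" "b \<subseteq> A" for a b
  proof -
    have "a \<inter> b \<in> sets M" "a \<inter> b \<subseteq> A"
      using that by auto
    then show ?thesis
      using that A(2) by (simp add: measure_cond_meas[OF M A] field_simps)
  qed
  have prod: "(\<forall>a\<in>\<A>. \<forall>b\<in>{Y -` B \<inter> A |B. B \<in> sets N}. C.prob (a \<inter> b) = C.prob a * C.prob b) \<longleftrightarrow>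
      (\<forall>a\<in>\<A>. \<forall>B\<in>sets N.
         measure M (a \<inter> (Y -` B \<inter> A)) * measure M A = measure M a * measure M (Y -` B \<inter> A))"
    if \<A>: "\<forall>a\<in>\<A>. a \<in> sets M \<and> a \<subseteq> A" and Y: "\<forall>B\<in>sets N. Y -` B \<inter> A \<in> sets M"
  proof -
    have "C.prob (a \<inter> (Y -` B \<inter> A)) = C.prob a * C.prob (Y -` B \<inter> A) \<longleftrightarrow>
        measure M (a \<inter> (Y -` B \<inter> A)) * measure M A = measure M a * measure M (Y -` B \<inter> A)"
      if "a \<in> \<A>" "B \<in> sets N" for a B
      using prob_eq[of a "Y -` B \<inter> A"] \<A> Y that by blast
    then show ?thesis
      by blast
  qed
  have sets_\<A>: "\<A> \<subseteq> C.events \<longleftrightarrow> (\<forall>a\<in>\<A>. a \<in> sets M \<and> a \<subseteq> A)"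
    unfolding subset_iff sets_cond_meas_iff[OF A(1)] by blast
  have sets_Y: "{Y -` B \<inter> A |B. B \<in> sets N} \<subseteq> C.events \<longleftrightarrow> (\<forall>B\<in>sets N. Y -` B \<inter> A \<in> sets M)"
    unfolding subset_iff sets_cond_meas_iff[OF A(1)] by blast
  show ?thesis
    unfolding indep_rv_def C.indep_sets2_eq space sets_\<A> sets_Y using prod by blast
qed

lemma indep_rv_sigma_sets:
  assumes "prob_space N" "Int_stable G" "indep_rv N G Y Mv"
  shows "indep_rv N (sigma_sets (space N) G) Y Mv"
proof -
  interpret prob_space N by fact
  let ?P = "{Y -` B \<inter> space N | B. B \<in> sets Mv}"
  have "Int_stable ?P"
  proof (rule Int_stableI)
    fix a b assume "a \<in> ?P" "b \<in> ?P"
    then obtain B1 B2 where "a = Y -` B1 \<inter> space N" "b = Y -` B2 \<inter> space N" "B1 \<in> sets Mv" "B2 \<in> sets Mv"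
      by blast
    then show "a \<inter> b \<in> ?P"
      by (intro CollectI exI[of _ "B1 \<inter> B2"]) auto
  qed
  then have "indep_set (sigma_sets (space N) G) (sigma_sets (space N) ?P)"
    using assms(2,3) unfolding indep_rv_def by (intro indep_set_sigma_sets)
  then show ?thesis
    unfolding indep_rv_def indep_sets2_eq by (blast intro: sigma_sets.Basic)
qed

section \<open>Measurability of the shifted path\<close>

lemma cadlag_increment:
  fixes x :: "real \<Rightarrow> 'b::topological_group_add"
  assumes x: "cadlag x" and r: "0 \<le> r"
  shows "cadlag (\<lambda>s. if 0 \<le> s then x (r + s) - x r else 0)"
proof -
  have shift: "filterlim (\<lambda>s. r + s) (at_right (r + t)) (at_right t)"
    "filterlim (\<lambda>s. r + s) (at_left (r + t)) (at_left t)" for t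
    by (auto simp: filterlim_at eventually_at_filter intro!: tendsto_eq_intros)
  have right: "((\<lambda>s. if 0 \<le> s then x (r + s) - x r else 0) \<longlongrightarrow> x (r + t) - x r) (at_right t)"
    if "0 \<le> t" for t
  proof -
    have "((\<lambda>s. x (r + s)) \<longlongrightarrow> x (r + t)) (at_right t)"
      using x r that unfolding cadlag_def by (auto intro: filterlim_compose[OF _ shift(1)])
    then have "((\<lambda>s. x (r + s) - x r) \<longlongrightarrow> x (r + t) - x r) (at_right t)"
      by (intro tendsto_diff tendsto_const)
    moreover have "eventually (\<lambda>s. x (r + s) - x r = (if 0 \<le> s then x (r + s) - x r else 0)) (at_right t)"
      using eventually_at_right_less[of t] by eventually_elim (use that in simp)
    ultimately show ?thesis
      by (simp add: tendsto_cong)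
  qed
  have left: "\<exists>l. ((\<lambda>s. if 0 \<le> s then x (r + s) - x r else 0) \<longlongrightarrow> l) (at_left t)"
    if t: "0 < t" for t
  proof -
    obtain l where "(x \<longlongrightarrow> l) (at_left (r + t))"
      using x r t unfolding cadlag_def by (metis add_nonneg_pos)
    then have "((\<lambda>s. x (r + s) - x r) \<longlongrightarrow> l - x r) (at_left t)"
      by (intro tendsto_diff tendsto_const filterlim_compose[OF _ shift(2)])
    moreover have "eventually (\<lambda>s. x (r + s) - x r = (if 0 \<le> s then x (r + s) - x r else 0)) (at_left t)"
      using t by (auto simp: eventually_at_left_field intro!: exI[of _ 0])
    ultimately show ?thesis
      by (auto simp: tendsto_cong)
  qed
  show ?thesis
    unfolding cadlag_def using right left by simp
qed

lemma shiftX_in_Dspace: "cadlag (\<lambda>t. X t \<omega>) \<Longrightarrow> shiftX X S \<omega> \<in> Dspace"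
  unfolding Dspace_def shiftX_def using cadlag_increment[of "\<lambda>t. X t \<omega>" "enn2real (S \<omega>)"] by auto

lemma shiftX_cong:
  assumes "S \<omega> = T \<omega>"
  shows "shiftX X S \<omega> = shiftX X T \<omega>"
  unfolding shiftX_def assms ..

lemma tendsto_at_right_sequentially_ge:
  fixes g :: "real \<Rightarrow> 'b::topological_space"
  assumes g: "(g \<longlongrightarrow> g t) (at_right t)" and ge: "\<And>n. t \<le> u n" and u: "u \<longlonglongrightarrow> t"
  shows "(\<lambda>n. g (u n)) \<longlonglongrightarrow> g t"
proof (rule topological_tendstoI)
  fix S assume S: "open S" "g t \<in> S"
  then obtain b where b: "b > t" "\<And>y. t < y \<Longrightarrow> y < b \<Longrightarrow> g y \<in> S"
    using topological_tendstoD[OF g] by (auto simp: eventually_at_right_field)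
  have "eventually (\<lambda>n. u n < b) sequentially"
    using u b(1) by (rule order_tendstoD)
  then show "eventually (\<lambda>n. g (u n) \<in> S) sequentially"
    by eventually_elim (metis S(2) b(2) ge order_le_less)
qed

lemma dyadic_ceiling_tendsto:
  fixes x :: real
  assumes "0 \<le> x"
  shows "\<And>n. x \<le> real (nat \<lceil>x * 2^n\<rceil>) / 2^n" and "(\<lambda>n. real (nat \<lceil>x * 2^n\<rceil>) / 2^n) \<longlonglongrightarrow> x"
proof -
  have int: "real (nat \<lceil>x * 2^n\<rceil>) = of_int \<lceil>x * 2^n\<rceil>" for n :: nat
    using assms by simp
  show lower: "x \<le> real (nat \<lceil>x * 2^n\<rceil>) / 2^n" for n :: nat
    using le_of_int_ceiling[of "x * 2^n"] unfolding int by (simp add: field_simps)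
  have upper: "real (nat \<lceil>x * 2^n\<rceil>) / 2^n \<le> x + 1 / 2^n" for n :: nat
  proof -
    have "of_int \<lceil>x * 2^n\<rceil> \<le> x * 2^n + 1"
      using ceiling_correct[of "x * 2^n"] by linarith
    then show ?thesis
      unfolding int by (simp add: divide_le_eq distrib_right)
  qed
  have "(\<lambda>n. x + 1 / 2^n) \<longlonglongrightarrow> x + 0"
    by (rule tendsto_add[OF tendsto_const LIMSEQ_divide_realpow_zero]) simp
  then have lim: "(\<lambda>n. x + 1 / 2^n) \<longlonglongrightarrow> x"
    by (simp only: add_0_right)
  show "(\<lambda>n. real (nat \<lceil>x * 2^n\<rceil>) / 2^n) \<longlonglongrightarrow> x"
    by (rule tendsto_sandwich[OF always_eventually always_eventually tendsto_const lim])
       (use lower upper in blast)+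
qed

text \<open>A right-continuous process evaluated at a measurable time is measurable: approximate the time
  from above by the dyadic times \<open>\<lceil>2\<^sup>n T\<rceil>/2\<^sup>n\<close>, which take countably many values.\<close>

lemma measurable_right_continuous_at_time:
  fixes Z :: "real \<Rightarrow> 'a \<Rightarrow> 'b::metric_space"
  assumes Z: "\<And>t. 0 \<le> t \<Longrightarrow> Z t \<in> borel_measurable M"
    and right: "\<And>\<omega> t. \<omega> \<in> space M \<Longrightarrow> 0 \<le> t \<Longrightarrow> ((\<lambda>s. Z s \<omega>) \<longlongrightarrow> Z t \<omega>) (at_right t)"
    and T: "T \<in> borel_measurable M" "\<And>\<omega>. \<omega> \<in> space M \<Longrightarrow> 0 \<le> T \<omega>"
  shows "(\<lambda>\<omega>. Z (T \<omega>) \<omega>) \<in> borel_measurable M"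
proof (rule borel_measurable_LIMSEQ_metric)
  fix n :: nat
  have "(\<lambda>\<omega>. nat \<lceil>T \<omega> * 2^n\<rceil>) \<in> measurable M (count_space UNIV)"
    using T(1) by measurable
  then show "(\<lambda>\<omega>. Z (real (nat \<lceil>T \<omega> * 2^n\<rceil>) / 2^n) \<omega>) \<in> borel_measurable M"
    by (rule measurable_compose_countable[OF Z, rotated]) simp
next
  fix \<omega> assume \<omega>: "\<omega> \<in> space M"
  note T0 = T(2)[OF \<omega>]
  show "(\<lambda>n. Z (real (nat \<lceil>T \<omega> * 2^n\<rceil>) / 2^n) \<omega>) \<longlonglongrightarrow> Z (T \<omega>) \<omega>"
    by (rule tendsto_at_right_sequentially_ge[OF right[OF \<omega> T0] dyadic_ceiling_tendsto[OF T0]])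
qed

lemma measurable_shiftX:
  fixes X :: "real \<Rightarrow> 'a \<Rightarrow> real ^ 'd"
  assumes X: "\<And>t. 0 \<le> t \<Longrightarrow> X t \<in> borel_measurable M"
    and cadlag: "\<And>\<omega>. \<omega> \<in> space M \<Longrightarrow> cadlag (\<lambda>t. X t \<omega>)"
    and S: "S \<in> borel_measurable M"
  shows "shiftX X S \<in> measurable M Dmeas"
  unfolding Dmeas_def
proof (rule measurable_measure_of)
  have in_D: "shiftX X S \<omega> \<in> Dspace" if "\<omega> \<in> space M" for \<omega>
    using cadlag[OF that] by (rule shiftX_in_Dspace)
  then show "shiftX X S \<in> space M \<rightarrow> Dspace" ..
  fix D assume "D \<in> {{w \<in> Dspace. w t \<in> B} | t B. 0 \<le> t \<and> B \<in> sets (borel :: (real ^ 'd) measure)}"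
  then obtain t and B :: "(real ^ 'd) set"
    where D: "D = {w \<in> Dspace. w t \<in> B}" and t: "0 \<le> t" and B: "B \<in> sets borel"
    by blast
  have right: "((\<lambda>s. X s \<omega>) \<longlongrightarrow> X s0 \<omega>) (at_right s0)" if "\<omega> \<in> space M" "0 \<le> s0" for \<omega> s0
    using cadlag[OF that(1)] that(2) unfolding cadlag_def by blast
  have X_at: "(\<lambda>\<omega>. X (T \<omega>) \<omega>) \<in> borel_measurable M"
    if "T \<in> borel_measurable M" "\<And>\<omega>. 0 \<le> T \<omega>" for T
    using measurable_right_continuous_at_time[OF X right that(1)] that(2) by blast
  have "(\<lambda>\<omega>. X (enn2real (S \<omega>) + t) \<omega> - X (enn2real (S \<omega>)) \<omega>) \<in> borel_measurable M"
    using S t by (intro borel_measurable_diff X_at) auto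
  moreover have "shiftX X S -` D \<inter> space M =
      (\<lambda>\<omega>. X (enn2real (S \<omega>) + t) \<omega> - X (enn2real (S \<omega>)) \<omega>) -` B \<inter> space M"
    using in_D t unfolding D by (auto simp: shiftX_def)
  ultimately show "shiftX X S -` D \<inter> space M \<in> sets M"
    using B by (simp add: measurable_sets)
qed auto

section \<open>Graphs of random times and generators of \<open>F'\<^sub>S\<close>\<close>

lemma fin_sets: "S \<in> borel_measurable M \<Longrightarrow> fin M S \<in> sets M"
  unfolding fin_def by measurable

lemma fin_subset_space: "fin M S \<subseteq> space M"
  unfolding fin_def by auto

lemma mem_graph_iff: "(\<omega>, t) \<in> graph M S \<longleftrightarrow> \<omega> \<in> fin M S \<and> t = enn2real (S \<omega>)"
proof
  assume "(\<omega>, t) \<in> graph M S"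
  then have "\<omega> \<in> space M" "0 \<le> t" "S \<omega> = ennreal t"
    unfolding graph_def by auto
  then show "\<omega> \<in> fin M S \<and> t = enn2real (S \<omega>)"
    unfolding fin_def by simp
next
  assume "\<omega> \<in> fin M S \<and> t = enn2real (S \<omega>)"
  then have "\<omega> \<in> space M" "S \<omega> < top" "t = enn2real (S \<omega>)"
    unfolding fin_def by auto
  then show "(\<omega>, t) \<in> graph M S"
    unfolding graph_def by simp
qed

lemma blackX_eq_shiftX: "blackX X (\<omega>, enn2real (S \<omega>)) = shiftX X S \<omega>"
  unfolding blackX_def shiftX_def by (simp only: fst_conv snd_conv)

lemma fin_eq_if_graph_slices_eq:
  assumes "\<And>t. (\<omega>, t) \<in> graph M S \<longleftrightarrow> (\<omega>, t) \<in> graph M R \<inter> A"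
  shows "\<omega> \<in> fin M S \<longleftrightarrow> \<omega> \<in> fin M R \<and> (\<omega>, enn2real (R \<omega>)) \<in> A"
    and "\<omega> \<in> fin M S \<Longrightarrow> S \<omega> = R \<omega>"
proof -
  show "\<omega> \<in> fin M S \<longleftrightarrow> \<omega> \<in> fin M R \<and> (\<omega>, enn2real (R \<omega>)) \<in> A"
    using assms[of "enn2real (S \<omega>)"] assms[of "enn2real (R \<omega>)"] by (auto simp: mem_graph_iff)
  assume S: "\<omega> \<in> fin M S"
  then have R: "\<omega> \<in> fin M R" and eq: "enn2real (S \<omega>) = enn2real (R \<omega>)"
    using assms[of "enn2real (S \<omega>)"] by (auto simp: mem_graph_iff)
  have "S \<omega> = ennreal (enn2real (S \<omega>))" "R \<omega> = ennreal (enn2real (R \<omega>))"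
    using S R unfolding fin_def by simp_all
  then show "S \<omega> = R \<omega>"
    unfolding eq by simp
qed

lemma fin_graph_Int:
  assumes "graph M S = graph M R \<inter> A"
  shows "fin M S = {\<omega> \<in> fin M R. (\<omega>, enn2real (R \<omega>)) \<in> A}" and "\<omega> \<in> fin M S \<Longrightarrow> S \<omega> = R \<omega>"
  using fin_eq_if_graph_slices_eq[where M=M and S=S and R=R and A=A] assms by auto

lemma AE_graph_slices_eq_if_evan_eq:
  assumes "evan_eq M S T"
  shows "AE \<omega> in M. \<forall>t. (\<omega>, t) \<in> S \<longleftrightarrow> (\<omega>, t) \<in> T"
proof -
  obtain N where N: "N \<in> null_sets M" "fst ` ((S - T) \<union> (T - S)) \<subseteq> N"
    using assms unfolding evan_eq_def by blast
  have "\<omega> \<in> N" if "\<not> ((\<omega>, t) \<in> S \<longleftrightarrow> (\<omega>, t) \<in> T)" for \<omega> t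
    using N(2) that by (force intro: image_eqI[of \<omega> fst "(\<omega>, t)"])
  then show ?thesis
    by (intro AE_I'[OF N(1)]) blast
qed

lemma evan_eq_refl: "evan_eq M S S"
  unfolding evan_eq_def by auto

definition Fprime_gen :: "'a measure \<Rightarrow> (real \<Rightarrow> 'a measure) \<Rightarrow> ('a \<Rightarrow> ennreal) \<Rightarrow> 'a set set" where
  "Fprime_gen M F S = {{\<omega> \<in> fin M S. Z (\<omega>, enn2real (S \<omega>)) \<in> B} | Z B.
     Z \<in> borel_measurable (optional M F) \<and> B \<in> sets (borel :: real measure)}"

lemma sets_Fprime: "sets (Fprime M F S) = sigma_sets (fin M S) (Fprime_gen M F S)"
  unfolding Fprime_def Fprime_gen_def by (rule sets_measure_of) auto

lemma Fprime_gen_subset_fin: "a \<in> Fprime_gen M F S \<Longrightarrow> a \<subseteq> fin M S"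
  unfolding Fprime_gen_def by auto

lemma fin_in_Fprime_gen: "fin M S \<in> Fprime_gen M F S"
  unfolding Fprime_gen_def by (intro CollectI exI[of _ "\<lambda>_. 0::real"] exI[of _ UNIV]) auto

lemma optional_in_Fprime_gen:
  assumes "A \<in> sets (optional M F)"
  shows "{\<omega> \<in> fin M S. (\<omega>, enn2real (S \<omega>)) \<in> A} \<in> Fprime_gen M F S"
proof -
  have "(\<lambda>p. indicator A p :: real) \<in> borel_measurable (optional M F)"
    using assms by measurable
  then show ?thesis
    unfolding Fprime_gen_def
    by (intro CollectI exI[of _ "\<lambda>p. indicator A p :: real"] exI[of _ "{1::real}"])
       (auto simp: indicator_def)
qed

lemma Int_stable_Fprime_gen: "Int_stable (Fprime_gen M F S)"
proof (rule Int_stableI)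
  fix a b assume "a \<in> Fprime_gen M F S" "b \<in> Fprime_gen M F S"
  then obtain Z1 Z2 :: "'a \<times> real \<Rightarrow> real" and B1 B2 :: "real set"
    where a: "a = {\<omega> \<in> fin M S. Z1 (\<omega>, enn2real (S \<omega>)) \<in> B1}"
      and b: "b = {\<omega> \<in> fin M S. Z2 (\<omega>, enn2real (S \<omega>)) \<in> B2}"
      and Z: "Z1 \<in> borel_measurable (optional M F)" "Z2 \<in> borel_measurable (optional M F)"
      and B: "B1 \<in> sets borel" "B2 \<in> sets borel"
    unfolding Fprime_gen_def by blast
  have "(\<lambda>p. indicator (B1 \<times> B2) (Z1 p, Z2 p) :: real) \<in> borel_measurable (optional M F)"
    using Z B by measurable
  then show "a \<inter> b \<in> Fprime_gen M F S"
    unfolding Fprime_gen_def a b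
    by (intro CollectI exI[of _ "\<lambda>p. indicator (B1 \<times> B2) (Z1 p, Z2 p) :: real"] exI[of _ "{1::real}"])
       (auto simp: indicator_def)
qed

lemma Fprime_gen_restrict:
  assumes sub: "fin M P \<subseteq> fin M R" and eq: "\<And>\<omega>. \<omega> \<in> fin M P \<Longrightarrow> P \<omega> = R \<omega>"
    and a: "a \<in> Fprime_gen M F P"
  obtains b where "b \<in> Fprime_gen M F R" "a = b \<inter> fin M P"
proof -
  obtain Z and B :: "real set" where a_eq: "a = {\<omega> \<in> fin M P. Z (\<omega>, enn2real (P \<omega>)) \<in> B}"
    and ZB: "Z \<in> borel_measurable (optional M F)" "B \<in> sets borel"
    using a unfolding Fprime_gen_def by blast
  let ?b = "{\<omega> \<in> fin M R. Z (\<omega>, enn2real (R \<omega>)) \<in> B}"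
  have "?b \<in> Fprime_gen M F R"
    unfolding Fprime_gen_def using ZB by blast
  moreover have "a = ?b \<inter> fin M P"
    unfolding a_eq using sub eq by auto
  ultimately show ?thesis
    by (rule that)
qed

text \<open>The graph map \<open>\<omega> \<mapsto> (\<omega>, T \<omega>)\<close> is optional-measurable because the generating processes
  are right-continuous and adapted, hence measurable at any measurable time.\<close>

lemma measurable_graph_optional:
  assumes F: "filtration_on M F" and T: "T \<in> borel_measurable M" "\<And>\<omega>. \<omega> \<in> space M \<Longrightarrow> 0 \<le> T \<omega>"
  shows "(\<lambda>\<omega>. (\<omega>, T \<omega>)) \<in> measurable M (optional M F)"
  unfolding optional_def
proof (rule measurable_measure_of)
  show "(\<lambda>\<omega>. (\<omega>, T \<omega>)) \<in> space M \<rightarrow> space M \<times> {0..}"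
    using T(2) by auto
  fix D assume "D \<in> {{p \<in> space M \<times> {0..}. Z (snd p) (fst p) \<in> B} | (Z :: real \<Rightarrow> 'a \<Rightarrow> real) B.
      (\<forall>t\<ge>0. Z t \<in> borel_measurable (F t)) \<and> (\<forall>\<omega>\<in>space M. cadlag (\<lambda>t. Z t \<omega>)) \<and>
      B \<in> sets (borel :: real measure)}"
  then obtain Z :: "real \<Rightarrow> 'a \<Rightarrow> real" and B where D: "D = {p \<in> space M \<times> {0..}. Z (snd p) (fst p) \<in> B}"
    and adapted: "\<forall>t\<ge>0. Z t \<in> borel_measurable (F t)" and cadlag: "\<forall>\<omega>\<in>space M. cadlag (\<lambda>t. Z t \<omega>)"
    and B: "B \<in> sets borel"
    by blast
  have "(\<lambda>\<omega>. Z (T \<omega>) \<omega>) \<in> borel_measurable M"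
  proof (rule measurable_right_continuous_at_time[OF _ _ T])
    show "Z t \<in> borel_measurable M" if "0 \<le> t" for t
      using adapted F that measurable_from_subalg unfolding filtration_on_def by blast
    show "((\<lambda>s. Z s \<omega>) \<longlongrightarrow> Z t \<omega>) (at_right t)" if "\<omega> \<in> space M" "0 \<le> t" for \<omega> t
      using cadlag that unfolding cadlag_def by blast
  qed
  moreover have "(\<lambda>\<omega>. (\<omega>, T \<omega>)) -` D \<inter> space M = (\<lambda>\<omega>. Z (T \<omega>) \<omega>) -` B \<inter> space M"
    unfolding D using T(2) by auto
  ultimately show "(\<lambda>\<omega>. (\<omega>, T \<omega>)) -` D \<inter> space M \<in> sets M"
    using B by (simp add: measurable_sets)
qed auto

lemma Fprime_gen_subset_sets:
  assumes F: "filtration_on M F" and S: "S \<in> borel_measurable M"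
  shows "Fprime_gen M F S \<subseteq> sets M"
proof
  fix a assume "a \<in> Fprime_gen M F S"
  then obtain Z and B :: "real set" where a: "a = {\<omega> \<in> fin M S. Z (\<omega>, enn2real (S \<omega>)) \<in> B}"
    and Z: "Z \<in> borel_measurable (optional M F)" and B: "B \<in> sets borel"
    unfolding Fprime_gen_def by blast
  have "(\<lambda>\<omega>. (\<omega>, enn2real (S \<omega>))) \<in> measurable M (optional M F)"
    using S by (intro measurable_graph_optional[OF F]) auto
  then have "(\<lambda>\<omega>. Z (\<omega>, enn2real (S \<omega>))) \<in> borel_measurable M"
    using Z by (rule measurable_comp[unfolded comp_def])
  then have "(\<lambda>\<omega>. Z (\<omega>, enn2real (S \<omega>))) -` B \<inter> fin M S \<in> sets M"
    using fin_sets[OF S] B by (rule vimage_Int_sets)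
  moreover have "a = (\<lambda>\<omega>. Z (\<omega>, enn2real (S \<omega>))) -` B \<inter> fin M S"
    unfolding a by auto
  ultimately show "a \<in> sets M"
    by simp
qed

lemma indep_rv_Fprime_iff_Fprime_gen:
  assumes "prob_space (cond_meas M (fin M S))"
  shows "indep_rv (cond_meas M (fin M S)) (sets (Fprime M F S)) Y N \<longleftrightarrow>
    indep_rv (cond_meas M (fin M S)) (Fprime_gen M F S) Y N"
proof
  have "Fprime_gen M F S \<subseteq> sets (Fprime M F S)"
    unfolding sets_Fprime by (auto intro: sigma_sets.Basic)
  then show "indep_rv (cond_meas M (fin M S)) (sets (Fprime M F S)) Y N \<Longrightarrow>
      indep_rv (cond_meas M (fin M S)) (Fprime_gen M F S) Y N"
    unfolding indep_rv_def prob_space.indep_sets2_eq[OF assms] by blast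
next
  assume "indep_rv (cond_meas M (fin M S)) (Fprime_gen M F S) Y N"
  then have "indep_rv (cond_meas M (fin M S)) (sigma_sets (space (cond_meas M (fin M S))) (Fprime_gen M F S)) Y N"
    by (rule indep_rv_sigma_sets[OF assms Int_stable_Fprime_gen])
  then show "indep_rv (cond_meas M (fin M S)) (sets (Fprime M F S)) Y N"
    by (simp add: sets_Fprime space_cond_meas[OF fin_subset_space])
qed

section \<open>The product formula\<close>

text \<open>All events in the product formula lie inside \<open>{S < \<infinity>}\<close>, so it is unaffected by
  conditioning on \<open>{S < \<infinity>}\<close>.\<close>

definition shift_product_formula ::
    "'a measure \<Rightarrow> (real \<Rightarrow> 'a measure) \<Rightarrow> (real \<Rightarrow> 'a \<Rightarrow> real ^ 'd) \<Rightarrow> ('a \<Rightarrow> ennreal) \<Rightarrow>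
      (real \<Rightarrow> real ^ 'd) measure \<Rightarrow> bool" where
  "shift_product_formula M F X S N \<longleftrightarrow> (\<forall>a \<in> Fprime_gen M F S. \<forall>\<Lambda> \<in> sets Dmeas.
     measure M (a \<inter> (shiftX X S -` \<Lambda> \<inter> fin M S)) = measure M a * measure N \<Lambda>)"

abbreviation shift_law :: "'a measure \<Rightarrow> (real \<Rightarrow> 'a \<Rightarrow> real ^ 'd) \<Rightarrow> ('a \<Rightarrow> ennreal) \<Rightarrow> (real \<Rightarrow> real ^ 'd) measure" where
  "shift_law M X S \<equiv> distr (cond_meas M (fin M S)) Dmeas (shiftX X S)"

definition shift_indep_law ::
    "'a measure \<Rightarrow> (real \<Rightarrow> 'a measure) \<Rightarrow> (real \<Rightarrow> 'a \<Rightarrow> real ^ 'd) \<Rightarrow> ('a \<Rightarrow> ennreal) \<Rightarrow>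
      (real \<Rightarrow> real ^ 'd) measure \<Rightarrow> bool" where
  "shift_indep_law M F X S N \<longleftrightarrow>
     indep_rv (cond_meas M (fin M S)) (sets (Fprime M F S)) (shiftX X S) Dmeas \<and> shift_law M X S = N"

lemma shift_product_formula_restrict_optional:
  fixes X :: "real \<Rightarrow> 'a \<Rightarrow> real ^ 'd"
  assumes A: "A \<in> sets (optional M F)" and graph: "graph M P = A \<inter> graph M R"
    and formula: "shift_product_formula M F X R N"
  shows "shift_product_formula M F X P N"
  unfolding shift_product_formula_def
proof (intro ballI)
  have graph': "graph M P = graph M R \<inter> A"
    using graph by blast
  note finP = fin_graph_Int(1)[OF graph']
  have shift_eq: "shiftX X P \<omega> = shiftX X R \<omega>" if "\<omega> \<in> fin M P" for \<omega>
    using fin_graph_Int(2)[OF graph' that] by (rule shiftX_cong)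
  have sub: "fin M P \<subseteq> fin M R"
    unfolding finP by blast
  have finP_gen: "fin M P \<in> Fprime_gen M F R"
    unfolding finP by (rule optional_in_Fprime_gen[OF A])
  fix a and \<Lambda> :: "(real \<Rightarrow> real ^ 'd) set" assume a: "a \<in> Fprime_gen M F P" and \<Lambda>: "\<Lambda> \<in> sets Dmeas"
  obtain b where b: "b \<in> Fprime_gen M F R" "a = b \<inter> fin M P"
    using Fprime_gen_restrict[OF sub fin_graph_Int(2)[OF graph'] a] .
  have "a \<in> Fprime_gen M F R"
    using b finP_gen Int_stable_Fprime_gen unfolding Int_stable_def by blast
  moreover have "a \<inter> (shiftX X P -` \<Lambda> \<inter> fin M P) = a \<inter> (shiftX X R -` \<Lambda> \<inter> fin M R)"
    using b(2) sub by (auto simp: shift_eq)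
  ultimately show "measure M (a \<inter> (shiftX X P -` \<Lambda> \<inter> fin M P)) = measure M a * measure N \<Lambda>"
    using formula \<Lambda> unfolding shift_product_formula_def by simp
qed

lemma fin_graph_Int_blackX:
  assumes "graph M P = graph M R \<inter> A" and "\<And>\<omega>. \<omega> \<in> fin M R \<Longrightarrow>
    (\<omega>, enn2real (R \<omega>)) \<in> A \<longleftrightarrow> blackX X (\<omega>, enn2real (R \<omega>)) \<in> \<Gamma>"
  shows "fin M P = shiftX X R -` \<Gamma> \<inter> fin M R"
  unfolding fin_graph_Int(1)[OF assms(1)] using assms(2) by (auto simp: blackX_eq_shiftX)

lemma shift_product_formula_restrict_event:
  fixes X :: "real \<Rightarrow> 'a \<Rightarrow> real ^ 'd"
  assumes N: "prob_space N" "sets N = sets Dmeas" and \<Gamma>: "\<Gamma> \<in> sets Dmeas" "measure N \<Gamma> > 0"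
    and graph: "graph M P = (blackX X -` \<Gamma> \<inter> (space M \<times> {0..})) \<inter> graph M R"
    and formula: "shift_product_formula M F X R N"
  shows "shift_product_formula M F X P (uniform_measure N \<Gamma>)"
  unfolding shift_product_formula_def
proof (intro ballI)
  interpret N: prob_space N by fact
  have graph': "graph M P = graph M R \<inter> (blackX X -` \<Gamma> \<inter> (space M \<times> {0..}))"
    using graph by blast
  have finP: "fin M P = shiftX X R -` \<Gamma> \<inter> fin M R"
    by (rule fin_graph_Int_blackX[OF graph']) (auto simp: fin_def)
  have shift_eq: "shiftX X P \<omega> = shiftX X R \<omega>" if "\<omega> \<in> fin M P" for \<omega>
    using fin_graph_Int(2)[OF graph' that] by (rule shiftX_cong)
  have sub: "fin M P \<subseteq> fin M R"
    unfolding finP by blast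
  have prob_b: "measure M (b \<inter> (shiftX X R -` \<Lambda> \<inter> fin M R)) = measure M b * measure N \<Lambda>"
    if "b \<in> Fprime_gen M F R" "\<Lambda> \<in> sets Dmeas" for b \<Lambda>
    using formula that unfolding shift_product_formula_def by blast
  fix a and \<Lambda> :: "(real \<Rightarrow> real ^ 'd) set" assume a: "a \<in> Fprime_gen M F P" and \<Lambda>: "\<Lambda> \<in> sets Dmeas"
  obtain b where b: "b \<in> Fprime_gen M F R" "a = b \<inter> fin M P"
    using Fprime_gen_restrict[OF sub fin_graph_Int(2)[OF graph'] a] .
  have \<Gamma>\<Lambda>: "\<Gamma> \<inter> \<Lambda> \<in> sets Dmeas"
    using \<Gamma>(1) \<Lambda> by (rule sets.Int)
  have "a \<inter> (shiftX X P -` \<Lambda> \<inter> fin M P) = b \<inter> (shiftX X R -` (\<Gamma> \<inter> \<Lambda>) \<inter> fin M R)"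
    unfolding b(2) using finP by (auto simp: shift_eq)
  then have "measure M (a \<inter> (shiftX X P -` \<Lambda> \<inter> fin M P)) = measure M b * measure N (\<Gamma> \<inter> \<Lambda>)"
    using prob_b[OF b(1) \<Gamma>\<Lambda>] by simp
  moreover have "measure M a = measure M b * measure N \<Gamma>"
    using prob_b[OF b(1) \<Gamma>(1)] unfolding b(2) finP .
  moreover have "measure (uniform_measure N \<Gamma>) \<Lambda> = measure N (\<Gamma> \<inter> \<Lambda>) / measure N \<Gamma>"
    using \<Gamma> \<Lambda> N(2) by (simp add: N.emeasure_eq_measure)
  ultimately show "measure M (a \<inter> (shiftX X P -` \<Lambda> \<inter> fin M P)) =
      measure M a * measure (uniform_measure N \<Gamma>) \<Lambda>"
    using \<Gamma>(2) by simp
qed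

lemma measure_uniform_measure_total:
  assumes "prob_space M" "\<Gamma> \<in> sets M" "0 < measure M \<Gamma>" "measure M \<Gamma> < 1" "\<Lambda> \<in> sets M"
  shows "measure M \<Gamma> * measure (uniform_measure M \<Gamma>) \<Lambda> +
    (1 - measure M \<Gamma>) * measure (uniform_measure M (space M - \<Gamma>)) \<Lambda> = measure M \<Lambda>"
proof -
  interpret prob_space M by fact
  have "measure (uniform_measure M \<Gamma>) \<Lambda> = prob (\<Gamma> \<inter> \<Lambda>) / prob \<Gamma>"
    using assms(2-5) by (simp add: emeasure_eq_measure)
  moreover have "measure (uniform_measure M (space M - \<Gamma>)) \<Lambda> = prob (\<Lambda> - \<Gamma>) / (1 - prob \<Gamma>)"
  proof -
    have "(space M - \<Gamma>) \<inter> \<Lambda> = \<Lambda> - \<Gamma>"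
      using sets.sets_into_space[OF assms(5)] by blast
    then show ?thesis
      using assms(2-5) by (simp add: emeasure_eq_measure prob_compl)
  qed
  moreover have "prob (\<Lambda> - \<Gamma>) = prob \<Lambda> - prob (\<Gamma> \<inter> \<Lambda>)"
    using finite_measure_Diff'[OF assms(5,2)] by (simp add: Int_commute)
  ultimately show ?thesis
    using assms(3,4) by (simp add: field_simps)
qed

locale filtered_cadlag_process = prob_space M
  for M :: "'a measure" and F :: "real \<Rightarrow> 'a measure" and X :: "real \<Rightarrow> 'a \<Rightarrow> real ^ 'd" +
  assumes filtration: "filtration_on M F"
    and measurable_X: "\<And>t. 0 \<le> t \<Longrightarrow> X t \<in> borel_measurable M"
    and cadlag_X: "\<And>\<omega>. \<omega> \<in> space M \<Longrightarrow> cadlag (\<lambda>t. X t \<omega>)"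

lemma filtered_cadlag_process_if_levy:
  assumes "prob_space M" "filtration_on M F" "levy M F X"
  shows "filtered_cadlag_process M F X"
proof -
  have "X t \<in> borel_measurable M" if "0 \<le> t" for t
    using assms(2,3) that measurable_from_subalg unfolding filtration_on_def levy_def by blast
  then show ?thesis
    using assms unfolding filtered_cadlag_process_def filtered_cadlag_process_axioms_def levy_def
    by blast
qed

context filtered_cadlag_process
begin

lemma measurable_shift: "S \<in> borel_measurable M \<Longrightarrow> shiftX X S \<in> measurable M Dmeas"
  using measurable_X cadlag_X by (rule measurable_shiftX)

lemma prob_space_shift_law:
  "S \<in> borel_measurable M \<Longrightarrow> prob (fin M S) > 0 \<Longrightarrow> prob_space (shift_law M X S)"
  by (intro prob_space.prob_space_distr prob_space_cond_meas measurable_cond_meas measurable_shift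
      fin_sets finite_measure_axioms)

lemma indep_shift_iff_Fprime_gen:
  assumes S: "S \<in> borel_measurable M" and pos: "prob (fin M S) > 0"
  shows "indep_rv (cond_meas M (fin M S)) (sets (Fprime M F S)) (shiftX X S) Dmeas \<longleftrightarrow>
    (\<forall>a\<in>Fprime_gen M F S. \<forall>\<Lambda>\<in>sets Dmeas.
       prob (a \<inter> (shiftX X S -` \<Lambda> \<inter> fin M S)) * prob (fin M S) =
       prob a * prob (shiftX X S -` \<Lambda> \<inter> fin M S))"
proof -
  have E: "fin M S \<in> events"
    using S by (rule fin_sets)
  have "\<forall>a\<in>Fprime_gen M F S. a \<in> events \<and> a \<subseteq> fin M S"
    using Fprime_gen_subset_sets[OF filtration S] Fprime_gen_subset_fin by blast
  moreover have "\<forall>\<Lambda>\<in>sets Dmeas. shiftX X S -` \<Lambda> \<inter> fin M S \<in> events"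
    using vimage_Int_sets[OF measurable_shift[OF S] E] by blast
  ultimately show ?thesis
    unfolding indep_rv_Fprime_iff_Fprime_gen[OF prob_space_cond_meas[OF finite_measure_axioms E pos]]
    unfolding indep_rv_cond_meas_iff[OF finite_measure_axioms E pos]
    by simp
qed

lemma shift_law_eqI:
  assumes S: "S \<in> borel_measurable M" and pos: "prob (fin M S) > 0"
    and N: "prob_space N" "sets N = sets Dmeas"
    and eq: "\<And>\<Lambda>. \<Lambda> \<in> sets Dmeas \<Longrightarrow> prob (shiftX X S -` \<Lambda> \<inter> fin M S) = prob (fin M S) * measure N \<Lambda>"
  shows "shift_law M X S = N"
proof (rule measure_eqI)
  interpret L: prob_space "shift_law M X S"
    by (rule prob_space_shift_law[OF S pos])
  interpret N: prob_space N by fact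
  show "sets (shift_law M X S) = sets N"
    using N(2) by simp
  fix \<Lambda> assume "\<Lambda> \<in> sets (shift_law M X S)"
  then have \<Lambda>: "\<Lambda> \<in> sets Dmeas"
    by simp
  show "emeasure (shift_law M X S) \<Lambda> = emeasure N \<Lambda>"
    using measure_distr_cond_meas[OF finite_measure_axioms fin_sets[OF S] pos measurable_shift[OF S] \<Lambda>]
      eq[OF \<Lambda>] pos
    by (simp add: L.emeasure_eq_measure N.emeasure_eq_measure)
qed

lemma shift_indep_law_iff_product_formula:
  assumes S: "S \<in> borel_measurable M" and pos: "prob (fin M S) > 0"
    and N: "prob_space N" "sets N = sets Dmeas"
  shows "shift_indep_law M F X S N \<longleftrightarrow> shift_product_formula M F X S N"
proof
  let ?E = "fin M S" and ?Y = "shiftX X S"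
  assume "shift_indep_law M F X S N"
  then have indep: "indep_rv (cond_meas M ?E) (sets (Fprime M F S)) ?Y Dmeas"
    and law: "shift_law M X S = N"
    unfolding shift_indep_law_def by auto
  show "shift_product_formula M F X S N"
    unfolding shift_product_formula_def
  proof (intro ballI)
    fix a and \<Lambda> :: "(real \<Rightarrow> real ^ 'd) set"
    assume a: "a \<in> Fprime_gen M F S" and \<Lambda>: "\<Lambda> \<in> sets Dmeas"
    have "prob (a \<inter> (?Y -` \<Lambda> \<inter> ?E)) * prob ?E = prob a * prob (?Y -` \<Lambda> \<inter> ?E)"
      using indep a \<Lambda> unfolding indep_shift_iff_Fprime_gen[OF S pos] by blast
    also have "prob (?Y -` \<Lambda> \<inter> ?E) = measure N \<Lambda> * prob ?E"
      using measure_distr_cond_meas[OF finite_measure_axioms fin_sets[OF S] pos measurable_shift[OF S] \<Lambda>] pos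
      unfolding law by simp
    finally have "(prob (a \<inter> (?Y -` \<Lambda> \<inter> ?E)) - prob a * measure N \<Lambda>) * prob ?E = 0"
      by (simp add: algebra_simps)
    then show "prob (a \<inter> (?Y -` \<Lambda> \<inter> ?E)) = prob a * measure N \<Lambda>"
      using pos by simp
  qed
next
  let ?E = "fin M S" and ?Y = "shiftX X S"
  assume "shift_product_formula M F X S N"
  then have product: "prob (a \<inter> (?Y -` \<Lambda> \<inter> ?E)) = prob a * measure N \<Lambda>"
    if "a \<in> Fprime_gen M F S" "\<Lambda> \<in> sets Dmeas" for a \<Lambda>
    using that unfolding shift_product_formula_def by blast
  have law: "prob (?Y -` \<Lambda> \<inter> ?E) = prob ?E * measure N \<Lambda>" if "\<Lambda> \<in> sets Dmeas" for \<Lambda>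
  proof -
    have "?E \<inter> (?Y -` \<Lambda> \<inter> ?E) = ?Y -` \<Lambda> \<inter> ?E"
      by blast
    then show ?thesis
      using product[OF fin_in_Fprime_gen that] by simp
  qed
  have "indep_rv (cond_meas M ?E) (sets (Fprime M F S)) ?Y Dmeas"
    unfolding indep_shift_iff_Fprime_gen[OF S pos] using product law by simp
  moreover have "shift_law M X S = N"
    using S pos N law by (rule shift_law_eqI)
  ultimately show "shift_indep_law M F X S N"
    unfolding shift_indep_law_def by blast
qed

lemma shift_product_formula_if_indep:
  assumes "S \<in> borel_measurable M" "prob (fin M S) > 0"
    and "indep_rv (cond_meas M (fin M S)) (sets (Fprime M F S)) (shiftX X S) Dmeas"
  shows "shift_product_formula M F X S (shift_law M X S)"
  using shift_indep_law_iff_product_formula[OF assms(1,2) prob_space_shift_law[OF assms(1,2)]] assms(3)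
  by (simp add: shift_indep_law_def)

section \<open>Gluing two random times\<close>

text \<open>Off a null set, \<open>R\<^sub>1\<close> coincides with \<open>R\<close> on the piece \<open>E\<close> of \<open>{R < \<infinity>}\<close> cut out by \<open>A\<close>, so a
  generator of \<open>F'\<^sub>R\<close> intersected with \<open>E\<close> is a generator of \<open>F'\<^sub>R\<^sub>1\<close> up to a null set.\<close>

lemma shift_product_formula_piece:
  fixes R :: "'a \<Rightarrow> ennreal" and A :: "('a \<times> real) set"
  defines "E \<equiv> {\<omega> \<in> fin M R. (\<omega>, enn2real (R \<omega>)) \<in> A}"
  assumes R: "R \<in> borel_measurable M" and R1: "R1 \<in> borel_measurable M" and E: "E \<in> events"
    and evan: "evan_eq M (graph M R1) (graph M R \<inter> A)"
    and formula: "shift_product_formula M F X R1 N"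
    and a: "a \<in> Fprime_gen M F R" and \<Lambda>: "\<Lambda> \<in> sets Dmeas"
  shows "prob (a \<inter> (shiftX X R -` \<Lambda> \<inter> fin M R) \<inter> E) = prob (a \<inter> E) * measure N \<Lambda>"
proof -
  obtain Z and B :: "real set" where a_eq: "a = {\<omega> \<in> fin M R. Z (\<omega>, enn2real (R \<omega>)) \<in> B}"
    and ZB: "Z \<in> borel_measurable (optional M F)" "B \<in> sets borel"
    using a unfolding Fprime_gen_def by blast
  define a1 where "a1 = {\<omega> \<in> fin M R1. Z (\<omega>, enn2real (R1 \<omega>)) \<in> B}"
  have a1: "a1 \<in> Fprime_gen M F R1"
    unfolding a1_def Fprime_gen_def using ZB by blast
  have "AE \<omega> in M. (\<omega> \<in> a1 \<longleftrightarrow> \<omega> \<in> a \<inter> E) \<and>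
      (\<omega> \<in> a1 \<inter> (shiftX X R1 -` \<Lambda> \<inter> fin M R1) \<longleftrightarrow> \<omega> \<in> a \<inter> (shiftX X R -` \<Lambda> \<inter> fin M R) \<inter> E)"
    using AE_graph_slices_eq_if_evan_eq[OF evan]
  proof eventually_elim
    case (elim \<omega>)
    then have "\<And>t. (\<omega>, t) \<in> graph M R1 \<longleftrightarrow> (\<omega>, t) \<in> graph M R \<inter> A"
      by blast
    note slice = fin_eq_if_graph_slices_eq[OF this]
    show ?case
    proof (cases "\<omega> \<in> fin M R1")
      case True
      then have "\<omega> \<in> E" "\<omega> \<in> fin M R" "R1 \<omega> = R \<omega>"
        using slice by (auto simp: E_def)
      moreover have "shiftX X R1 \<omega> = shiftX X R \<omega>"
        using \<open>R1 \<omega> = R \<omega>\<close> by (rule shiftX_cong)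
      ultimately show ?thesis
        using True by (simp add: a1_def a_eq)
    next
      case False
      then have "\<omega> \<notin> E"
        using slice by (auto simp: E_def)
      with False show ?thesis
        by (simp add: a1_def)
    qed
  qed
  then have AE_a: "AE \<omega> in M. \<omega> \<in> a1 \<longleftrightarrow> \<omega> \<in> a \<inter> E"
    and AE_event: "AE \<omega> in M. \<omega> \<in> a1 \<inter> (shiftX X R1 -` \<Lambda> \<inter> fin M R1) \<longleftrightarrow>
      \<omega> \<in> a \<inter> (shiftX X R -` \<Lambda> \<inter> fin M R) \<inter> E"
    by (simp_all add: AE_conj_iff)
  have sets: "a \<in> events" "a1 \<in> events" "shiftX X R -` \<Lambda> \<inter> fin M R \<in> events"
    "shiftX X R1 -` \<Lambda> \<inter> fin M R1 \<in> events"
    using Fprime_gen_subset_sets[OF filtration] R R1 a a1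
      vimage_Int_sets[OF measurable_shift fin_sets \<Lambda>] by blast+
  have "prob a1 = prob (a \<inter> E)"
    using AE_a sets E by (intro measure_eq_AE) auto
  moreover have "prob (a1 \<inter> (shiftX X R1 -` \<Lambda> \<inter> fin M R1)) = prob (a \<inter> (shiftX X R -` \<Lambda> \<inter> fin M R) \<inter> E)"
    using AE_event sets E by (intro measure_eq_AE) auto
  ultimately show ?thesis
    using formula a1 \<Lambda> unfolding shift_product_formula_def by simp
qed

lemma shift_product_formula_split:
  fixes R :: "'a \<Rightarrow> ennreal" and A :: "('a \<times> real) set"
  defines "E \<equiv> {\<omega> \<in> fin M R. (\<omega>, enn2real (R \<omega>)) \<in> A}"
  assumes R: "R \<in> borel_measurable M" and R1: "R1 \<in> borel_measurable M" and R2: "R2 \<in> borel_measurable M"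
    and E: "E \<in> events"
    and evan1: "evan_eq M (graph M R1) (graph M R \<inter> A)"
    and evan2: "evan_eq M (graph M R2) (graph M R \<inter> A')"
    and compl: "\<And>p. p \<in> graph M R \<Longrightarrow> p \<in> A' \<longleftrightarrow> p \<notin> A"
    and formula1: "shift_product_formula M F X R1 N1" and formula2: "shift_product_formula M F X R2 N2"
    and a: "a \<in> Fprime_gen M F R" and \<Lambda>: "\<Lambda> \<in> sets Dmeas"
  shows "prob (a \<inter> (shiftX X R -` \<Lambda> \<inter> fin M R)) = prob (a \<inter> E) * measure N1 \<Lambda> + prob (a - E) * measure N2 \<Lambda>"
proof -
  let ?T = "a \<inter> (shiftX X R -` \<Lambda> \<inter> fin M R)"
  have E': "{\<omega> \<in> fin M R. (\<omega>, enn2real (R \<omega>)) \<in> A'} = fin M R - E"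
    using compl by (auto simp: E_def mem_graph_iff)
  have E'_sets: "fin M R - E \<in> events"
    using fin_sets[OF R] E by blast
  have sub: "a \<subseteq> fin M R"
    using a by (rule Fprime_gen_subset_fin)
  have T: "?T \<in> events"
    using Fprime_gen_subset_sets[OF filtration R] a vimage_Int_sets[OF measurable_shift[OF R] fin_sets[OF R] \<Lambda>]
    by blast
  have "prob ?T = prob (?T \<inter> E) + prob (?T - E)"
    using finite_measure_Diff'[OF T E] by simp
  also have "prob (?T \<inter> E) = prob (a \<inter> E) * measure N1 \<Lambda>"
    using shift_product_formula_piece[OF R R1 E[unfolded E_def] evan1 formula1 a \<Lambda>] by (simp add: E_def)
  also have "prob (?T - E) = prob (a - E) * measure N2 \<Lambda>"
  proof -
    have "?T - E = ?T \<inter> (fin M R - E)" "a - E = a \<inter> (fin M R - E)"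
      using sub by auto
    then show ?thesis
      using shift_product_formula_piece[OF R R2 E'_sets[folded E'] evan2 formula2 a \<Lambda>] E' by simp
  qed
  finally show ?thesis .
qed

lemma shift_indep_law_restrict_optional:
  assumes R: "R \<in> borel_measurable M" "prob (fin M R) > 0"
    and indep: "indep_rv (cond_meas M (fin M R)) (sets (Fprime M F R)) (shiftX X R) Dmeas"
    and P: "P \<in> borel_measurable M" "prob (fin M P) > 0"
    and A: "A \<in> sets (optional M F)" and graph: "graph M P = A \<inter> graph M R"
  shows "shift_indep_law M F X P (shift_law M X R)"
proof -
  have "shift_product_formula M F X P (shift_law M X R)"
    by (rule shift_product_formula_restrict_optional[OF A graph shift_product_formula_if_indep[OF R indep]])
  then show ?thesis
    by (simp add: shift_indep_law_iff_product_formula[OF P prob_space_shift_law[OF R]])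
qed

lemma shift_indep_law_restrict_event:
  assumes R: "R \<in> borel_measurable M" "prob (fin M R) > 0"
    and indep: "indep_rv (cond_meas M (fin M R)) (sets (Fprime M F R)) (shiftX X R) Dmeas"
    and P: "P \<in> borel_measurable M" "prob (fin M P) > 0"
    and \<Gamma>: "\<Gamma> \<in> sets Dmeas" and graph: "graph M P = (blackX X -` \<Gamma> \<inter> (space M \<times> {0..})) \<inter> graph M R"
  shows "shift_indep_law M F X P (uniform_measure (shift_law M X R) \<Gamma>)"
proof -
  interpret L: prob_space "shift_law M X R"
    by (rule prob_space_shift_law[OF R])
  have "graph M P = graph M R \<inter> (blackX X -` \<Gamma> \<inter> (space M \<times> {0..}))"
    using graph by blast
  then have "fin M P = shiftX X R -` \<Gamma> \<inter> fin M R"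
    by (rule fin_graph_Int_blackX) (auto simp: fin_def)
  then have "measure (shift_law M X R) \<Gamma> = prob (fin M P) / prob (fin M R)"
    using measure_distr_cond_meas[OF finite_measure_axioms fin_sets[OF R(1)] R(2) measurable_shift[OF R(1)] \<Gamma>]
    by simp
  then have pos: "measure (shift_law M X R) \<Gamma> > 0"
    using P(2) R(2) by simp
  have "prob_space (uniform_measure (shift_law M X R) \<Gamma>)"
    using pos by (intro prob_space_uniform_measure) (simp_all add: L.emeasure_eq_measure)
  moreover have "shift_product_formula M F X P (uniform_measure (shift_law M X R) \<Gamma>)"
    by (rule shift_product_formula_restrict_event[OF L.prob_space_axioms _ \<Gamma> pos graph
        shift_product_formula_if_indep[OF R indep]]) simp
  ultimately show ?thesis
    by (simp add: shift_indep_law_iff_product_formula[OF P])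
qed

lemma shift_indep_law_glue_optional:
  assumes R: "R \<in> borel_measurable M" "prob (fin M R) > 0"
    and R1: "R1 \<in> borel_measurable M" "prob (fin M R1) > 0"
    and R2: "R2 \<in> borel_measurable M" "prob (fin M R2) > 0"
    and indep1: "indep_rv (cond_meas M (fin M R1)) (sets (Fprime M F R1)) (shiftX X R1) Dmeas"
    and indep2: "indep_rv (cond_meas M (fin M R2)) (sets (Fprime M F R2)) (shiftX X R2) Dmeas"
    and A: "A \<in> sets (optional M F)"
    and evan1: "evan_eq M (graph M R1) (graph M R \<inter> A)"
    and evan2: "evan_eq M (graph M R2) (graph M R \<inter> ((space M \<times> {0..}) - A))"
    and law: "shift_law M X R1 = shift_law M X R2"
  shows "shift_indep_law M F X R (shift_law M X R1)"
proof -
  define E where "E = {\<omega> \<in> fin M R. (\<omega>, enn2real (R \<omega>)) \<in> A}"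
  have E: "E \<in> events"
    using Fprime_gen_subset_sets[OF filtration R(1)] optional_in_Fprime_gen[OF A] unfolding E_def by blast
  have compl: "p \<in> (space M \<times> {0..}) - A \<longleftrightarrow> p \<notin> A" if "p \<in> graph M R" for p
    using that by (auto simp: graph_def)
  have formula1: "shift_product_formula M F X R1 (shift_law M X R1)"
    by (rule shift_product_formula_if_indep[OF R1 indep1])
  have formula2: "shift_product_formula M F X R2 (shift_law M X R1)"
    unfolding law by (rule shift_product_formula_if_indep[OF R2 indep2])
  have "shift_product_formula M F X R (shift_law M X R1)"
    unfolding shift_product_formula_def
  proof (intro ballI)
    fix a and \<Lambda> :: "(real \<Rightarrow> real ^ 'd) set"
    assume a: "a \<in> Fprime_gen M F R" and \<Lambda>: "\<Lambda> \<in> sets Dmeas"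
    have "a \<in> events"
      using Fprime_gen_subset_sets[OF filtration R(1)] a by blast
    then have "prob a = prob (a \<inter> E) + prob (a - E)"
      using finite_measure_Diff'[OF _ E] by simp
    moreover have "prob (a \<inter> (shiftX X R -` \<Lambda> \<inter> fin M R)) =
        prob (a \<inter> E) * measure (shift_law M X R1) \<Lambda> + prob (a - E) * measure (shift_law M X R1) \<Lambda>"
      using shift_product_formula_split[OF R(1) R1(1) R2(1) E[unfolded E_def] evan1 evan2 compl
          formula1 formula2 a \<Lambda>]
      unfolding E_def .
    ultimately show "prob (a \<inter> (shiftX X R -` \<Lambda> \<inter> fin M R)) = prob a * measure (shift_law M X R1) \<Lambda>"
      by (simp add: distrib_right)
  qed
  then show ?thesis
    by (simp add: shift_indep_law_iff_product_formula[OF R prob_space_shift_law[OF R1]])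
qed

lemma prob_Int_shift_event_if_indep_indicator:
  assumes R: "R \<in> borel_measurable M" "prob (fin M R) > 0" and \<Gamma>: "\<Gamma> \<in> sets Dmeas"
    and indep: "indep_rv (cond_meas M (fin M R)) (sets (Fprime M F R))
      (\<lambda>\<omega>. indicator \<Gamma> (shiftX X R \<omega>) :: real) borel"
    and a: "a \<in> Fprime_gen M F R"
  shows "prob (a \<inter> (shiftX X R -` \<Gamma> \<inter> fin M R)) =
    prob a * measure (cond_meas M (fin M R)) {\<omega> \<in> fin M R. shiftX X R \<omega> \<in> \<Gamma>}"
proof -
  let ?I = "\<lambda>\<omega>. indicator \<Gamma> (shiftX X R \<omega>) :: real" and ?E = "shiftX X R -` \<Gamma> \<inter> fin M R"
  have "?E \<in> events"
    using measurable_shift[OF R(1)] fin_sets[OF R(1)] \<Gamma> by (rule vimage_Int_sets)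
  moreover have "{\<omega> \<in> fin M R. shiftX X R \<omega> \<in> \<Gamma>} = ?E"
    by blast
  ultimately have cond: "measure (cond_meas M (fin M R)) {\<omega> \<in> fin M R. shiftX X R \<omega> \<in> \<Gamma>} =
      prob ?E / prob (fin M R)"
    using measure_cond_meas[OF finite_measure_axioms fin_sets[OF R(1)] R(2)] by auto
  have "\<forall>b\<in>sets (Fprime M F R). \<forall>B\<in>sets borel.
      prob (b \<inter> (?I -` B \<inter> fin M R)) * prob (fin M R) = prob b * prob (?I -` B \<inter> fin M R)"
    using indep unfolding indep_rv_cond_meas_iff[OF finite_measure_axioms fin_sets[OF R(1)] R(2)] by blast
  moreover have "a \<in> sets (Fprime M F R)"
    using a unfolding sets_Fprime by (rule sigma_sets.Basic)
  moreover have "?I -` {1} \<inter> fin M R = ?E"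
    by (auto simp: indicator_def)
  ultimately have "prob (a \<inter> ?E) * prob (fin M R) = prob a * prob ?E"
    by (metis borel_singleton sets.empty_sets)
  then show ?thesis
    unfolding cond using R(2) by (simp add: field_simps)
qed

lemma shift_indep_law_glue_event:
  fixes \<M> :: "(real \<Rightarrow> real ^ 'd) measure"
  assumes R: "R \<in> borel_measurable M" "prob (fin M R) > 0"
    and R1: "R1 \<in> borel_measurable M" "prob (fin M R1) > 0"
    and R2: "R2 \<in> borel_measurable M" "prob (fin M R2) > 0"
    and indep1: "indep_rv (cond_meas M (fin M R1)) (sets (Fprime M F R1)) (shiftX X R1) Dmeas"
    and indep2: "indep_rv (cond_meas M (fin M R2)) (sets (Fprime M F R2)) (shiftX X R2) Dmeas"
    and \<Gamma>: "\<Gamma> \<in> sets Dmeas"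
    and graph1: "graph M R1 = graph M R \<inter> {p. blackX X p \<in> \<Gamma>}"
    and graph2: "graph M R2 = graph M R \<inter> {p. blackX X p \<notin> \<Gamma>}"
    and indep_\<Gamma>: "indep_rv (cond_meas M (fin M R)) (sets (Fprime M F R))
      (\<lambda>\<omega>. indicator \<Gamma> (shiftX X R \<omega>) :: real) borel"
    and \<M>: "prob_space \<M>" "sets \<M> = sets Dmeas"
    and prob_\<Gamma>: "measure (cond_meas M (fin M R)) {\<omega> \<in> fin M R. shiftX X R \<omega> \<in> \<Gamma>} = measure \<M> \<Gamma>"
    and law1: "shift_law M X R1 = uniform_measure \<M> \<Gamma>"
    and law2: "shift_law M X R2 = uniform_measure \<M> (space Dmeas - \<Gamma>)"
  shows "shift_indep_law M F X R \<M>"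
proof -
  define E where "E = shiftX X R -` \<Gamma> \<inter> fin M R"
  define q where "q = measure \<M> \<Gamma>"
  have E_eq: "{\<omega> \<in> fin M R. (\<omega>, enn2real (R \<omega>)) \<in> {p. blackX X p \<in> \<Gamma>}} = E"
    unfolding E_def by (auto simp: blackX_eq_shiftX)
  have finR1: "fin M R1 = E"
    unfolding E_def using graph1 by (rule fin_graph_Int_blackX) simp
  have finR2: "fin M R2 = fin M R - E"
    unfolding fin_graph_Int(1)[OF graph2] E_def by (auto simp: blackX_eq_shiftX)
  have E: "E \<in> events" and sub: "E \<subseteq> fin M R"
    using fin_sets[OF R1(1)] unfolding finR1 E_def by auto
  have weight: "prob (a \<inter> E) = prob a * q" if "a \<in> Fprime_gen M F R" for a
    using prob_Int_shift_event_if_indep_indicator[OF R \<Gamma> indep_\<Gamma> that] prob_\<Gamma>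
    unfolding E_def q_def by simp
  have weight_compl: "prob (a - E) = prob a * (1 - q)" if "a \<in> Fprime_gen M F R" for a
  proof -
    have "a \<in> events"
      using Fprime_gen_subset_sets[OF filtration R(1)] that by blast
    then show ?thesis
      using finite_measure_Diff'[of a E] E weight[OF that] by (simp add: algebra_simps)
  qed
  have q_pos: "0 < q" and q_lt: "q < 1"
    using weight[OF fin_in_Fprime_gen] weight_compl[OF fin_in_Fprime_gen] R(2) R1(2) R2(2) sub
    unfolding finR1 finR2 by (simp_all add: Int_absorb1 zero_less_mult_iff)
  have evan1: "evan_eq M (graph M R1) (graph M R \<inter> {p. blackX X p \<in> \<Gamma>})"
    unfolding graph1 by (rule evan_eq_refl)
  have evan2: "evan_eq M (graph M R2) (graph M R \<inter> {p. blackX X p \<notin> \<Gamma>})"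
    unfolding graph2 by (rule evan_eq_refl)
  have space_\<M>: "space \<M> = space Dmeas"
    using \<M>(2) by (rule sets_eq_imp_space_eq)
  have formula1: "shift_product_formula M F X R1 (uniform_measure \<M> \<Gamma>)"
    using shift_product_formula_if_indep[OF R1 indep1] unfolding law1 .
  have formula2: "shift_product_formula M F X R2 (uniform_measure \<M> (space \<M> - \<Gamma>))"
    using shift_product_formula_if_indep[OF R2 indep2] unfolding law2 space_\<M> .
  have "shift_product_formula M F X R \<M>"
    unfolding shift_product_formula_def
  proof (intro ballI)
    fix a and \<Lambda> :: "(real \<Rightarrow> real ^ 'd) set"
    assume a: "a \<in> Fprime_gen M F R" and \<Lambda>: "\<Lambda> \<in> sets Dmeas"
    have "prob (a \<inter> (shiftX X R -` \<Lambda> \<inter> fin M R)) =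
        prob (a \<inter> E) * measure (uniform_measure \<M> \<Gamma>) \<Lambda> +
        prob (a - E) * measure (uniform_measure \<M> (space \<M> - \<Gamma>)) \<Lambda>"
      using shift_product_formula_split[OF R(1) R1(1) R2(1) E[folded E_eq] evan1 evan2 _ formula1 formula2 a \<Lambda>]
      unfolding E_eq by blast
    also have "\<dots> = prob a * (q * measure (uniform_measure \<M> \<Gamma>) \<Lambda> +
        (1 - q) * measure (uniform_measure \<M> (space \<M> - \<Gamma>)) \<Lambda>)"
      unfolding weight[OF a] weight_compl[OF a] by (simp add: algebra_simps)
    also have "\<dots> = prob a * measure \<M> \<Lambda>"
      using measure_uniform_measure_total[OF \<M>(1)] \<Gamma> \<Lambda> \<M>(2) q_pos q_lt unfolding q_def by simp
    finally show "prob (a \<inter> (shiftX X R -` \<Lambda> \<inter> fin M R)) = prob a * measure \<M> \<Lambda>" .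
  qed
  then show ?thesis
    by (simp add: shift_indep_law_iff_product_formula[OF R \<M>])
qed

end

theorem lemma3p2:
  fixes M :: "'a measure" and F :: "real \<Rightarrow> 'a measure"
    and X :: "real \<Rightarrow> 'a \<Rightarrow> real ^ 'd" and R :: "'a \<Rightarrow> ennreal"
  assumes "prob_space M"
    and "filtration_on M F"
    and "levy M F X"
    and "R \<in> borel_measurable M"
    and "measure M (fin M R) > 0"
  shows
   "(indep_rv (cond_meas M (fin M R)) (sets (Fprime M F R)) (shiftX X R) Dmeas \<longrightarrow>
      (\<forall>P A. P \<in> borel_measurable M \<and> measure M (fin M P) > 0 \<and>
             A \<in> sets (optional M F) \<union> sigma_blackX M X \<and> graph M P = A \<inter> graph M R \<longrightarrow>
        (A \<in> sets (optional M F) \<longrightarrow>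
           indep_rv (cond_meas M (fin M P)) (sets (Fprime M F P)) (shiftX X P) Dmeas \<and>
           distr (cond_meas M (fin M P)) Dmeas (shiftX X P) =
             distr (cond_meas M (fin M R)) Dmeas (shiftX X R)) \<and>
        (\<forall>\<Gamma> \<in> sets Dmeas. A = blackX X -` \<Gamma> \<inter> (space M \<times> {0..}) \<longrightarrow>
           indep_rv (cond_meas M (fin M P)) (sets (Fprime M F P)) (shiftX X P) Dmeas \<and>
           distr (cond_meas M (fin M P)) Dmeas (shiftX X P) =
             uniform_measure (distr (cond_meas M (fin M R)) Dmeas (shiftX X R)) \<Gamma>)))
    \<and>
    (\<forall>R1 R2. R1 \<in> borel_measurable M \<and> R2 \<in> borel_measurable M \<and>
        measure M (fin M R1) > 0 \<and> measure M (fin M R2) > 0 \<and>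
        indep_rv (cond_meas M (fin M R1)) (sets (Fprime M F R1)) (shiftX X R1) Dmeas \<and>
        indep_rv (cond_meas M (fin M R2)) (sets (Fprime M F R2)) (shiftX X R2) Dmeas \<longrightarrow>
      (\<forall>A \<in> sets (optional M F).
         evan_eq M (graph M R1) (graph M R \<inter> A) \<and>
         evan_eq M (graph M R2) (graph M R \<inter> ((space M \<times> {0..}) - A)) \<and>
         distr (cond_meas M (fin M R1)) Dmeas (shiftX X R1) =
           distr (cond_meas M (fin M R2)) Dmeas (shiftX X R2) \<longrightarrow>
         indep_rv (cond_meas M (fin M R)) (sets (Fprime M F R)) (shiftX X R) Dmeas \<and>
         distr (cond_meas M (fin M R)) Dmeas (shiftX X R) =
           distr (cond_meas M (fin M R1)) Dmeas (shiftX X R1)) \<and>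
      (\<forall>\<Gamma> \<in> sets Dmeas. \<forall>\<M> :: (real \<Rightarrow> real ^ 'd) measure.
         graph M R1 = graph M R \<inter> {p. blackX X p \<in> \<Gamma>} \<and>
         graph M R2 = graph M R \<inter> {p. blackX X p \<notin> \<Gamma>} \<and>
         indep_rv (cond_meas M (fin M R)) (sets (Fprime M F R))
           (\<lambda>\<omega>. indicator \<Gamma> (shiftX X R \<omega>) :: real) borel \<and>
         prob_space \<M> \<and> sets \<M> = sets Dmeas \<and>
         measure (cond_meas M (fin M R)) {\<omega> \<in> fin M R. shiftX X R \<omega> \<in> \<Gamma>} = measure \<M> \<Gamma> \<and>
         distr (cond_meas M (fin M R1)) Dmeas (shiftX X R1) = uniform_measure \<M> \<Gamma> \<and>
         distr (cond_meas M (fin M R2)) Dmeas (shiftX X R2) = uniform_measure \<M> (space Dmeas - \<Gamma>) \<longrightarrow>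
         indep_rv (cond_meas M (fin M R)) (sets (Fprime M F R)) (shiftX X R) Dmeas \<and>
         distr (cond_meas M (fin M R)) Dmeas (shiftX X R) = \<M>))"
proof -
  interpret filtered_cadlag_process M F X
    using assms(1-3) by (rule filtered_cadlag_process_if_levy)
  note R = assms(4,5)
  show ?thesis
    unfolding shift_indep_law_def[symmetric]
    apply (intro conjI impI allI ballI; elim conjE)
    subgoal by (rule shift_indep_law_restrict_optional[OF R])
    subgoal by (rule shift_indep_law_restrict_event[OF R]) simp_all
    subgoal by (rule shift_indep_law_glue_optional[OF R])
    subgoal by (rule shift_indep_law_glue_event[OF R])
    done
qed

end
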